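(* Let $a,b,c,d\in\{1,\dots,\ell\}$ be distinct. For all positive integers $m,n,r,s$, in $A(\mathcal{H}^+)$ we have $[S_{abcd}(m,n,r,s)]=(-1)^{m+n+r+s}[S_{abcd}(1,1,1,1)]$, where $S_{abcd}(m,n,r,s)=h_a(-m)h_b(-n)h_c(-r)h_d(-s)\mathbf{1}$.
   Context: $\mathfrak{h}$ is an $\ell$-dimensional complex space with orthonormal basis $h_1,\dots,h_\ell$; $\mathcal{H}=M(1,0)$ is the free bosonic vertex operator algebra generated by Heisenberg modes $h(n)$ acting on the vacuum $\mathbf{1}$; $\mathcal{H}^+$ is the fixed-point subalgebra of the automorphism induced by $h\mapsto-h$. $A(\mathcal{H}^+)=\mathcal{H}^+/O(\mathcal{H}^+)$ is Zhu's algebra, $O(\mathcal{H}^+)$ spanned by $u\circ v=\sum_{i\ge0}\binom{\mathrm{wt}\,u}{i}u_{i-2}v$, product induced by $u*v=\sum_{i\ge0}\binom{\mathrm{wt}\,u}{i}u_{i-1}v$; $[u]=u+O(\mathcal{H}^+)$. *)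

theory Defs
  imports Complex_Main "HOL-Library.Multiset" "HOL-Library.Function_Algebras"
          "HOL-Library.Product_Lexorder"
begin

text \<open>A monomial is a multiset of pairs (i,n), n \<ge> 1, standing for the
  product of the creation operators h_i(-n); the basis vector for the monomial
  M is the product of the h_i(-n), (i,n) in M, applied to the vacuum.\<close>

type_synonym mon = "(nat \<times> nat) multiset"
type_synonym vec = "mon \<Rightarrow> complex"

definition smul :: "complex \<Rightarrow> vec \<Rightarrow> vec" (infixr "*\<^sub>v" 75) where
  "c *\<^sub>v v = (\<lambda>M. c * v M)"

definition vac :: vec where
  "vac = (\<lambda>M. if M = {#} then 1 else 0)"

text \<open>Heisenberg modes h_i(p), p an integer:
  h_i(-n) (n>0) is multiplication by the variable (i,n);
  h_i(n) (n>0) is n times the partial derivative in the variable (i,n);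
  h_i(0) = 0 (zero momentum).  Hence [h_i(p),h_j(q)] = p \<delta>_ij \<delta>_{p+q,0}.\<close>

definition hmode :: "nat \<Rightarrow> int \<Rightarrow> vec \<Rightarrow> vec" where
  "hmode i p v =
     (if p < 0 then (\<lambda>M. if (i, nat (-p)) \<in># M then v (M - {#(i, nat (-p))#}) else 0)
      else if p > 0 then (\<lambda>M. of_int p * of_nat (count M (i, nat p) + 1) * v (M + {#(i, nat p)#}))
      else 0)"

definition fsum :: "(nat \<Rightarrow> vec) \<Rightarrow> vec" where
  "fsum t = sum t {j. t j \<noteq> 0}"

text \<open>Modes of the vertex operator of the basis vector
  h_{i1}(-n1) ... h_{ik}(-nk) 1 (given as a word), defined via the iterate
  formula (a_p u)_q = \<Sum>_{j\<ge>0} (-1)^j binom(p,j) (a_{p-j} u_{q+j} - (-1)^p u_{p+q-j} a_j)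
  with p = -n, where (-1)^j binom(-n,j) = binom(n+j-1,j), and 1_q = \<delta>_{q,-1}.\<close>
primrec wmode :: "(nat \<times> nat) list \<Rightarrow> int \<Rightarrow> vec \<Rightarrow> vec" where
  "wmode [] k v = (if k = -1 then v else 0)"
| "wmode (x # w) k v =
     fsum (\<lambda>j. of_nat ((snd x + j - 1) choose j) *\<^sub>v
        (hmode (fst x) (- int (snd x) - int j) (wmode w (k + int j) v)
         - ((-1) ^ snd x) *\<^sub>v wmode w (- int (snd x) + k - int j) (hmode (fst x) (int j) v)))"

definition vmode :: "vec \<Rightarrow> int \<Rightarrow> vec \<Rightarrow> vec" where
  "vmode u k v = sum (\<lambda>M. u M *\<^sub>v wmode (sorted_list_of_multiset M) k v) {M. u M \<noteq> 0}"

definition wtm :: "mon \<Rightarrow> nat" where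
  "wtm M = sum_mset (image_mset snd M)"

text \<open>M(1,0) for an \<ell>-dimensional h with orthonormal basis h_1..h_\<ell>.\<close>
definition Fock :: "nat \<Rightarrow> vec set" where
  "Fock l = {v. finite {M. v M \<noteq> 0} \<and>
      (\<forall>M. v M \<noteq> 0 \<longrightarrow> (\<forall>x\<in>#M. 1 \<le> fst x \<and> fst x \<le> l \<and> 1 \<le> snd x))}"

text \<open>H^+: fixed points of the automorphism induced by h \<mapsto> -h, which acts
  by (-1)^(number of creation operators) on monomials.\<close>
definition Hplus :: "nat \<Rightarrow> vec set" where
  "Hplus l = {v \<in> Fock l. \<forall>M. v M \<noteq> 0 \<longrightarrow> even (size M)}"

definition homog :: "nat \<Rightarrow> vec \<Rightarrow> bool" where
  "homog w u \<longleftrightarrow> (\<forall>M. u M \<noteq> 0 \<longrightarrow> wtm M = w)"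

text \<open>u \<circ> v for u homogeneous of weight w.\<close>
definition zcirc :: "nat \<Rightarrow> vec \<Rightarrow> vec \<Rightarrow> vec" where
  "zcirc w u v = (\<Sum>i\<le>w. of_nat (w choose i) *\<^sub>v vmode u (int i - 2) v)"

definition zstar :: "nat \<Rightarrow> vec \<Rightarrow> vec \<Rightarrow> vec" where
  "zstar w u v = (\<Sum>i\<le>w. of_nat (w choose i) *\<^sub>v vmode u (int i - 1) v)"

inductive_set OH :: "nat \<Rightarrow> vec set" for l :: nat where
  zero: "0 \<in> OH l"
| gen: "u \<in> Hplus l \<Longrightarrow> homog w u \<Longrightarrow> v \<in> Hplus l \<Longrightarrow> zcirc w u v \<in> OH l"
| add: "x \<in> OH l \<Longrightarrow> y \<in> OH l \<Longrightarrow> x + y \<in> OH l"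
| scale: "x \<in> OH l \<Longrightarrow> c *\<^sub>v x \<in> OH l"

text \<open>Equality of classes [u] = [v] in A(H^+) = H^+/O(H^+).\<close>
definition zhu_eq :: "nat \<Rightarrow> vec \<Rightarrow> vec \<Rightarrow> bool" where
  "zhu_eq l u v \<longleftrightarrow> u \<in> Hplus l \<and> v \<in> Hplus l \<and> u - v \<in> OH l"

definition S :: "nat \<Rightarrow> nat \<Rightarrow> nat \<Rightarrow> nat \<Rightarrow> nat \<Rightarrow> nat \<Rightarrow> nat \<Rightarrow> nat \<Rightarrow> vec" where
  "S a b c d m n r s =
     hmode a (- int m) (hmode b (- int n) (hmode c (- int r) (hmode d (- int s) vac)))"

end

theory Submission
  imports Defs
begin

text \<open>
  Let v be a monomial vector in which the colours i, j do not occur and write [i:p, j:q] for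
  h_i(-p) h_j(-q) v. For u = h_i(-p) h_j(-q) 1, of weight p + q, only the modes u_{-2} and u_{-1}
  act nontrivially on v, so u \<circ> v \<in> O(H^+) reads
  q [i:p, j:q+1] + p [i:p+1, j:q] + (p+q) [i:p, j:q] \<equiv> 0.
  If X_p is a monomial containing h_i(-p), h_j(-q), h_k(-t) with i, j, k distinct, adding the
  relations for the pairs (i,j) and (i,k) and subtracting the one for (j,k) cancels the mixed
  terms and leaves 2p (X_{p+1} + X_p) \<equiv> 0. So raising one mode flips the sign modulo O(H^+),
  and lowering each of the four modes to 1 in turn gives the theorem.
\<close>

definition basis_vec :: "mon \<Rightarrow> vec" where
  "basis_vec M = (\<lambda>N. if N = M then 1 else 0)"

definition fock_mon :: "nat \<Rightarrow> mon \<Rightarrow> bool" where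
  "fock_mon l M \<longleftrightarrow> (\<forall>x\<in>#M. fst x \<in> {1..l} \<and> 0 < snd x)"

definition OH_cong :: "nat \<Rightarrow> vec \<Rightarrow> vec \<Rightarrow> bool" where
  "OH_cong l u v \<longleftrightarrow> u - v \<in> OH l"

lemma supp_basis_vec: "{N. basis_vec M N \<noteq> 0} = {M}"
  by (auto simp: basis_vec_def)

lemma basis_vec_in_Hplus:
  assumes "fock_mon l M" "even (size M)"
  shows "basis_vec M \<in> Hplus l"
  using assms by (auto simp: Hplus_def Fock_def fock_mon_def supp_basis_vec basis_vec_def)

lemma smul_in_Hplus: "v \<in> Hplus l \<Longrightarrow> c *\<^sub>v v \<in> Hplus l"
  by (auto simp: Hplus_def Fock_def smul_def)

lemma smul_smul [simp]: "c *\<^sub>v (d *\<^sub>v v) = (c * d) *\<^sub>v v"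
  by (simp add: smul_def mult.assoc)

lemma smul_zero [simp]: "c *\<^sub>v (0::vec) = 0"
  by (simp add: smul_def fun_eq_iff)

lemma smul_one [simp]: "1 *\<^sub>v v = v"
  by (simp add: smul_def)

lemma hmode_neg_basis_vec:
  assumes "p < 0"
  shows "hmode i p (basis_vec M) = basis_vec (add_mset (i, nat (-p)) M)"
  using assms by (auto simp: hmode_def basis_vec_def fun_eq_iff)

lemma hmode_nonneg_basis_vec:
  assumes "0 \<le> p" "i \<notin> fst ` set_mset M"
  shows "hmode i p (basis_vec M) = 0"
proof (cases "p = 0")
  case False
  have "N + {#(i, nat p)#} \<noteq> M" for N
    using assms(2) by (metis fst_conv image_eqI multi_member_last union_iff)
  then show ?thesis
    using assms False by (simp add: hmode_def basis_vec_def fun_eq_iff)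
qed (simp add: hmode_def)

lemma hmode_zero [simp]: "hmode i p 0 = 0"
  by (simp add: hmode_def fun_eq_iff)

lemma hmode_smul: "hmode i p (c *\<^sub>v v) = c *\<^sub>v hmode i p v"
  by (auto simp: hmode_def smul_def fun_eq_iff)

lemma fsum_eq_sum:
  assumes "finite A" "\<And>j. j \<notin> A \<Longrightarrow> t j = 0"
  shows "fsum t = sum t A"
  unfolding fsum_def by (rule sum.mono_neutral_left) (use assms in auto)

lemma fsum_eq_0: "(\<And>j. t j = 0) \<Longrightarrow> fsum t = 0"
  by (simp add: fsum_def)

lemma wmode_zero [simp]: "wmode w k 0 = 0"
  by (induction w arbitrary: k) (auto intro!: fsum_eq_0)

lemma wmode_single_nonneg:
  assumes "0 \<le> k" "j \<notin> fst ` set_mset M"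
  shows "wmode [(j, q)] k (basis_vec M) = 0"
  using assms by (auto intro!: fsum_eq_0 simp: hmode_nonneg_basis_vec)

lemma wmode_single_minus1:
  assumes "0 < q" "j \<notin> fst ` set_mset M"
  shows "wmode [(j, q)] (-1) (basis_vec M) = basis_vec (add_mset (j, q) M)"
proof -
  have "wmode [(j, q)] (-1) (basis_vec M) = (\<Sum>j'\<in>{0}. of_nat ((q + j' - 1) choose j') *\<^sub>v
        (hmode j (- int q - int j') (wmode [] (-1 + int j') (basis_vec M))
         - ((-1) ^ q) *\<^sub>v wmode [] (- int q + -1 - int j') (hmode j (int j') (basis_vec M))))"
    unfolding wmode.simps(2) fst_conv snd_conv
    by (rule fsum_eq_sum) (auto simp: hmode_nonneg_basis_vec assms)
  then show ?thesis
    using assms by (simp add: hmode_nonneg_basis_vec hmode_neg_basis_vec)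
qed

lemma wmode_single_minus2:
  assumes "0 < q" "j \<notin> fst ` set_mset M"
  shows "wmode [(j, q)] (-2) (basis_vec M) = of_nat q *\<^sub>v basis_vec (add_mset (j, q + 1) M)"
proof -
  have "wmode [(j, q)] (-2) (basis_vec M) = (\<Sum>j'\<in>{1}. of_nat ((q + j' - 1) choose j') *\<^sub>v
        (hmode j (- int q - int j') (wmode [] (-2 + int j') (basis_vec M))
         - ((-1) ^ q) *\<^sub>v wmode [] (- int q + -2 - int j') (hmode j (int j') (basis_vec M))))"
    unfolding wmode.simps(2) fst_conv snd_conv
    by (rule fsum_eq_sum) (auto simp: hmode_nonneg_basis_vec assms)
  then show ?thesis
    using assms by (simp add: hmode_nonneg_basis_vec hmode_neg_basis_vec nat_add_distrib)
qed

declare wmode.simps(2) [simp del]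

lemma wmode_pair_nonneg:
  assumes "0 \<le> k" "i \<notin> fst ` set_mset M" "j \<notin> fst ` set_mset M"
  shows "wmode [(i, p), (j, q)] k (basis_vec M) = 0"
  unfolding wmode.simps(2)[of "(i, p)"] fst_conv snd_conv
  using assms by (auto intro!: fsum_eq_0 simp: hmode_nonneg_basis_vec wmode_single_nonneg)

lemma wmode_pair_minus1:
  assumes "0 < p" "0 < q" "i \<notin> fst ` set_mset M" "j \<notin> fst ` set_mset M"
  shows "wmode [(i, p), (j, q)] (-1) (basis_vec M) =
    basis_vec (add_mset (i, p) (add_mset (j, q) M))"
proof -
  have "wmode [(i, p), (j, q)] (-1) (basis_vec M) = (\<Sum>j'\<in>{0}. of_nat ((p + j' - 1) choose j') *\<^sub>v
        (hmode i (- int p - int j') (wmode [(j, q)] (-1 + int j') (basis_vec M))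
         - ((-1) ^ p) *\<^sub>v wmode [(j, q)] (- int p + -1 - int j') (hmode i (int j') (basis_vec M))))"
    unfolding wmode.simps(2)[of "(i, p)"] fst_conv snd_conv
    by (rule fsum_eq_sum) (auto simp: hmode_nonneg_basis_vec assms wmode_single_nonneg)
  then show ?thesis
    using assms by (simp add: hmode_nonneg_basis_vec hmode_neg_basis_vec wmode_single_minus1)
qed

lemma wmode_pair_minus2:
  assumes "0 < p" "0 < q" "i \<notin> fst ` set_mset M" "j \<notin> fst ` set_mset M"
  shows "wmode [(i, p), (j, q)] (-2) (basis_vec M) =
    of_nat q *\<^sub>v basis_vec (add_mset (i, p) (add_mset (j, q + 1) M))
    + of_nat p *\<^sub>v basis_vec (add_mset (i, p + 1) (add_mset (j, q) M))"
proof -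
  have "wmode [(i, p), (j, q)] (-2) (basis_vec M) = (\<Sum>j'\<in>{0,1}. of_nat ((p + j' - 1) choose j') *\<^sub>v
        (hmode i (- int p - int j') (wmode [(j, q)] (-2 + int j') (basis_vec M))
         - ((-1) ^ p) *\<^sub>v wmode [(j, q)] (- int p + -2 - int j') (hmode i (int j') (basis_vec M))))"
    unfolding wmode.simps(2)[of "(i, p)"] fst_conv snd_conv
    by (rule fsum_eq_sum) (auto simp: hmode_nonneg_basis_vec assms wmode_single_nonneg)
  then show ?thesis
    using assms by (simp add: hmode_nonneg_basis_vec hmode_neg_basis_vec wmode_single_minus1
        wmode_single_minus2 hmode_smul nat_add_distrib)
qed

lemma vmode_basis_vec_pair:
  "vmode (basis_vec {#x, y#}) k v = (if x \<le> y then wmode [x, y] k v else wmode [y, x] k v)"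
  by (simp add: vmode_def supp_basis_vec basis_vec_def)

lemma zcirc_pair_basis_vec:
  assumes "0 < p" "0 < q" "i \<notin> fst ` set_mset M" "j \<notin> fst ` set_mset M"
  shows "zcirc (p + q) (basis_vec {#(i, p), (j, q)#}) (basis_vec M) =
    of_nat q *\<^sub>v basis_vec (add_mset (i, p) (add_mset (j, q + 1) M))
    + of_nat p *\<^sub>v basis_vec (add_mset (i, p + 1) (add_mset (j, q) M))
    + of_nat (p + q) *\<^sub>v basis_vec (add_mset (i, p) (add_mset (j, q) M))"
proof -
  let ?t = "\<lambda>x. of_nat ((p + q) choose x) *\<^sub>v
    vmode (basis_vec {#(i, p), (j, q)#}) (int x - 2) (basis_vec M)"
  have "zcirc (p + q) (basis_vec {#(i, p), (j, q)#}) (basis_vec M) = sum ?t {..p + q}"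
    by (simp add: zcirc_def)
  also have "\<dots> = sum ?t {0, 1}"
    by (rule sum.mono_neutral_right)
      (use assms in \<open>auto simp: vmode_basis_vec_pair wmode_pair_nonneg\<close>)
  finally show ?thesis
    using assms by (simp add: vmode_basis_vec_pair wmode_pair_minus1 wmode_pair_minus2
        add_mset_commute add.commute)
qed

lemma OH_diff:
  assumes "x \<in> OH l" "y \<in> OH l"
  shows "x - y \<in> OH l"
proof -
  have "x + (-1) *\<^sub>v y = x - y" by (simp add: smul_def fun_eq_iff)
  with OH.add[OF assms(1) OH.scale[OF assms(2)]] show ?thesis by metis
qed

lemma OH_cong_trans [trans]: "OH_cong l u v \<Longrightarrow> OH_cong l v w \<Longrightarrow> OH_cong l u w"
  unfolding OH_cong_def by (drule (1) OH.add) simp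

lemma OH_cong_smul: "OH_cong l u v \<Longrightarrow> OH_cong l (c *\<^sub>v u) (c *\<^sub>v v)"
  unfolding OH_cong_def
  by (drule OH.scale[of _ _ c]) (simp add: smul_def fun_diff_def right_diff_distrib)

lemma OH_cong_alternating:
  assumes "\<And>x. 0 < x \<Longrightarrow> OH_cong l (f (Suc x)) ((-1) *\<^sub>v f x)" "0 < m"
  shows "OH_cong l (f m) ((-1) ^ (m + 1) *\<^sub>v f 1)"
  using assms(2)
proof (induction m rule: nat_induct_non_zero)
  case 1
  show ?case using OH.zero by (simp add: OH_cong_def)
next
  case (Suc x)
  have "OH_cong l (f (Suc x)) ((-1) *\<^sub>v f x)" using assms(1) Suc.hyps .
  also have "OH_cong l \<dots> ((-1) ^ (Suc x + 1) *\<^sub>v f 1)"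
    using OH_cong_smul[OF Suc.IH, of "-1"] by simp
  finally show ?case .
qed

lemma zcirc_pair_relation:
  assumes "i \<in> {1..l}" "j \<in> {1..l}" "0 < p" "0 < q"
    and "fock_mon l M" "even (size M)" "i \<notin> fst ` set_mset M" "j \<notin> fst ` set_mset M"
  shows "of_nat q *\<^sub>v basis_vec (add_mset (i, p) (add_mset (j, q + 1) M))
    + of_nat p *\<^sub>v basis_vec (add_mset (i, p + 1) (add_mset (j, q) M))
    + of_nat (p + q) *\<^sub>v basis_vec (add_mset (i, p) (add_mset (j, q) M)) \<in> OH l"
proof -
  have "zcirc (p + q) (basis_vec {#(i, p), (j, q)#}) (basis_vec M) \<in> OH l"
  proof (rule OH.gen)
    show "basis_vec {#(i, p), (j, q)#} \<in> Hplus l" "basis_vec M \<in> Hplus l"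
      using assms by (auto intro!: basis_vec_in_Hplus simp: fock_mon_def)
    show "homog (p + q) (basis_vec {#(i, p), (j, q)#})"
      by (simp add: homog_def basis_vec_def wtm_def)
  qed
  then show ?thesis using assms by (simp add: zcirc_pair_basis_vec)
qed

lemma raise_mode_OH_cong:
  assumes "i \<in> {1..l}" "j \<in> {1..l}" "k \<in> {1..l}" "distinct [i, j, k]" "0 < p" "0 < q" "0 < t"
    and "fock_mon l N" "odd (size N)"
    and "i \<notin> fst ` set_mset N" "j \<notin> fst ` set_mset N" "k \<notin> fst ` set_mset N"
  defines "X \<equiv> \<lambda>p. basis_vec (add_mset (i, p) (add_mset (j, q) (add_mset (k, t) N)))"
  shows "OH_cong l (X (Suc p)) ((-1) *\<^sub>v X p)"
proof -
  have fock: "fock_mon l (add_mset x N)" if "fst x \<in> {1..l}" "0 < snd x" for x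
    using assms(8) that by (simp add: fock_mon_def)
  have rel_ij: "of_nat q *\<^sub>v basis_vec (add_mset (i, p) (add_mset (j, q + 1) (add_mset (k, t) N)))
    + of_nat p *\<^sub>v X (p + 1) + of_nat (p + q) *\<^sub>v X p \<in> OH l"
    unfolding X_def using assms fock[of "(k, t)"] by (intro zcirc_pair_relation) auto
  have rel_ik: "of_nat t *\<^sub>v basis_vec (add_mset (i, p) (add_mset (k, t + 1) (add_mset (j, q) N)))
    + of_nat p *\<^sub>v X (p + 1) + of_nat (p + t) *\<^sub>v X p \<in> OH l"
    using zcirc_pair_relation[of i l k p t "add_mset (j, q) N"] assms fock[of "(j, q)"]
    by (simp add: add_mset_commute)
  have rel_jk: "of_nat t *\<^sub>v basis_vec (add_mset (i, p) (add_mset (k, t + 1) (add_mset (j, q) N)))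
    + of_nat q *\<^sub>v basis_vec (add_mset (i, p) (add_mset (j, q + 1) (add_mset (k, t) N)))
    + of_nat (q + t) *\<^sub>v X p \<in> OH l"
    using zcirc_pair_relation[of j l k q t "add_mset (i, p) N"] assms fock[of "(i, p)"]
    by (simp add: add_mset_commute)
  have combine: "OH_cong l u v"
    if "x \<in> OH l" "y \<in> OH l" "z \<in> OH l"
      and "u - v = (1 / (2 * of_nat p)) *\<^sub>v (x + y - z)" for u v x y z
    unfolding OH_cong_def using that by (metis OH.scale OH_diff OH.add)
  show ?thesis
    by (rule combine[OF rel_ij rel_ik rel_jk])
      (use assms(5) in \<open>simp add: smul_def fun_eq_iff field_simps\<close>)
qed

lemma lower_mode_to_one_OH_cong:
  assumes "a \<in> {1..l}" "b \<in> {1..l}" "c \<in> {1..l}" "d \<in> {1..l}" "distinct [a, b, c, d]"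
    and "0 < m" "0 < n" "0 < r" "0 < s"
  shows "OH_cong l (basis_vec {#(a, m), (b, n), (c, r), (d, s)#})
    ((-1) ^ (m + 1) *\<^sub>v basis_vec {#(a, 1), (b, n), (c, r), (d, s)#})"
  using assms
  by (intro OH_cong_alternating[where f = "\<lambda>m. basis_vec {#(a, m), (b, n), (c, r), (d, s)#}"]
      raise_mode_OH_cong) (auto simp: fock_mon_def)

lemma S_eq_basis_vec:
  assumes "0 < m" "0 < n" "0 < r" "0 < s"
  shows "S a b c d m n r s = basis_vec {#(a, m), (b, n), (c, r), (d, s)#}"
  using assms by (simp add: S_def vac_def basis_vec_def hmode_neg_basis_vec[unfolded basis_vec_def])

theorem lemma4p1p6:
  fixes l a b c d m n r s :: nat
  assumes "a \<in> {1..l}" "b \<in> {1..l}" "c \<in> {1..l}" "d \<in> {1..l}"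
    and "distinct [a, b, c, d]"
    and "0 < m" "0 < n" "0 < r" "0 < s"
  shows "zhu_eq l (S a b c d m n r s) (((-1) ^ (m + n + r + s)) *\<^sub>v S a b c d 1 1 1 1)"
proof -
  let ?B = "\<lambda>x y z w. basis_vec {#(a, x), (b, y), (c, z), (d, w)#}"
  have "OH_cong l (?B m n r s) ((-1) ^ (m + 1) *\<^sub>v ?B 1 n r s)"
    using assms by (rule lower_mode_to_one_OH_cong)
  also have "OH_cong l \<dots> (((-1) ^ (m + 1) * (-1) ^ (n + 1)) *\<^sub>v ?B 1 1 r s)"
    using OH_cong_smul[OF lower_mode_to_one_OH_cong[of b l a c d n 1 r s],
        of "(-1) ^ (m + 1)"] assms
    by (simp add: add_mset_commute)
  also have "OH_cong l \<dots> (((-1) ^ (m + 1) * (-1) ^ (n + 1) * (-1) ^ (r + 1)) *\<^sub>v ?B 1 1 1 s)"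
    using OH_cong_smul[OF lower_mode_to_one_OH_cong[of c l a b d r 1 1 s],
        of "(-1) ^ (m + 1) * (-1) ^ (n + 1)"] assms
    by (simp add: add_mset_commute)
  also have "OH_cong l \<dots>
      (((-1) ^ (m + 1) * (-1) ^ (n + 1) * (-1) ^ (r + 1) * (-1) ^ (s + 1)) *\<^sub>v ?B 1 1 1 1)"
    using OH_cong_smul[OF lower_mode_to_one_OH_cong[of d l a b c s 1 1 1],
        of "(-1) ^ (m + 1) * (-1) ^ (n + 1) * (-1) ^ (r + 1)"] assms
    by (simp add: add_mset_commute)
  also have "\<dots> = (-1) ^ (m + n + r + s) *\<^sub>v ?B 1 1 1 1"
    by (simp add: power_add)
  finally show ?thesis
    using assms by (auto simp: zhu_eq_def OH_cong_def S_eq_basis_vec fock_mon_def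
        intro!: basis_vec_in_Hplus smul_in_Hplus)
qed

end
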